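(* Let $r\ge0$ be an integer and let $(W,g)$ be a cubic space of dimension at most $\aleph_0$ with $\mathrm{rrk}(W)\le r$. Then $W$ embeds into the cubic space $V(r)$.
   Context: $k$ is algebraically closed of characteristic different from $2,3$. For $V$ with basis $\{v_i\}_{i\in I}$, the dual functionals $x_i$ are called coordinates; $P_n(V)$ is the space of formal, possibly infinite, $k$-linear combinations of degree-$n$ monomials in the $x_i$. A cubic space is $(V,f)$ with $f\in P_3(V)$; an embedding $(W,g)\to(V,f)$ is a $k$-linear map $\phi:W\to V$ with $f\circ\phi=g$. The strength of a homogeneous $h\in P_n(V)$, $n\ge1$, is the least $s$ with $h=\sum_{i=1}^s a_ib_i$, $a_i,b_i$ homogeneous of positive degree less than $n$ ($\infty$ if none). $\overline{P}_2(V)$ is $P_2(V)$ modulo the subspace of finite-strength quadratic forms; the residual rank $\mathrm{rrk}(f)\in\mathbf{N}\cup\{\infty\}$ is the dimension of the span in $\overline{P}_2(V)$ of the images of the formal partial derivatives $\partial f/\partial x_i$, and $\mathrm{rrk}(V,f)=\mathrm{rrk}(f)$. The cubic space $V(r)$ has coordinates $\{x_i\}_{1\le i\le r}\cup\{y_{i,j}\}_{1\le i\le r,\,j\ge1}\cup\{z_i\}_{i\ge1}$ and form $f_r=3\sum_{i=1}^rx_iq_i+\sum_{i\ge1}z_i^3$, where $q_i=\sum_{j\ge1}y_{i,j}^2$. *)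

theory Defs
  imports Main "HOL-Library.Multiset" "HOL-Library.Extended_Nat"
    "HOL-Computational_Algebra.Polynomial"
begin

text \<open>Formal (possibly infinite) power series in coordinates indexed by 'i:
  a monomial is a finite multiset of indices, a formal series is its coefficient
  function.\<close>

type_synonym ('i, 'k) fseries = "'i multiset \<Rightarrow> 'k"

definition homogeneous :: "nat \<Rightarrow> ('i, 'k::zero) fseries \<Rightarrow> bool" where
  "homogeneous n f \<longleftrightarrow> (\<forall>M. size M \<noteq> n \<longrightarrow> f M = 0)"

definition fmul :: "('i, 'k::comm_ring_1) fseries \<Rightarrow> ('i, 'k) fseries \<Rightarrow> ('i, 'k) fseries" where
  "fmul a b = (\<lambda>M. \<Sum>P\<in>{P. P \<subseteq># M}. a P * b (M - P))"

definition strength :: "nat \<Rightarrow> ('i, 'k::comm_ring_1) fseries \<Rightarrow> enat" where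
  "strength n h = (INF s \<in> {s. \<exists>a b. (\<forall>t<s. \<exists>d e. 0 < d \<and> d < n \<and> 0 < e \<and> e < n \<and>
        homogeneous d (a t) \<and> homogeneous e (b t)) \<and>
        h = (\<lambda>M. \<Sum>t<s. fmul (a t) (b t) M)}. enat s)"

definition fin_strength_quadric :: "('i, 'k::comm_ring_1) fseries \<Rightarrow> bool" where
  "fin_strength_quadric q \<longleftrightarrow> homogeneous 2 q \<and> strength 2 q < \<infinity>"

definition fderiv :: "'i \<Rightarrow> ('i, 'k::comm_ring_1) fseries \<Rightarrow> ('i, 'k) fseries" where
  "fderiv i f = (\<lambda>M. of_nat (count M i + 1) * f (add_mset i M))"

text \<open>Residual rank of a form whose coordinates are indexed by I: the dimension of
  the span of the classes of the partial derivatives in P_2 modulo finite-strength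
  quadrics, i.e. the supremum of the sizes of finite families of partial
  derivatives that are linearly independent modulo finite-strength quadrics.\<close>
definition rrk :: "'i set \<Rightarrow> ('i, 'k::field) fseries \<Rightarrow> enat" where
  "rrk I f = (SUP S \<in> {S. finite S \<and> S \<subseteq> I \<and>
       (\<forall>c. fin_strength_quadric (\<lambda>M. \<Sum>i\<in>S. c i * fderiv i f M) \<longrightarrow> (\<forall>i\<in>S. c i = 0))}.
     enat (card S))"

text \<open>The vector space with basis indexed by A: finitely supported coordinate vectors.\<close>
definition fin_vecs :: "'i set \<Rightarrow> ('i \<Rightarrow> 'k::zero) set" where
  "fin_vecs A = {v. finite {i. v i \<noteq> 0} \<and> (\<forall>i. i \<notin> A \<longrightarrow> v i = 0)}"

definition eval_form :: "nat \<Rightarrow> ('i, 'k::comm_ring_1) fseries \<Rightarrow> ('i \<Rightarrow> 'k) \<Rightarrow> 'k" where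
  "eval_form n f v = (\<Sum>M\<in>{M. size M = n \<and> set_mset M \<subseteq> {i. v i \<noteq> 0}}.
       f M * (\<Prod>i\<in>#M. v i))"

definition cubic_form :: "'i set \<Rightarrow> ('i, 'k::zero) fseries \<Rightarrow> bool" where
  "cubic_form I f \<longleftrightarrow> homogeneous 3 f \<and> (\<forall>M. f M \<noteq> 0 \<longrightarrow> set_mset M \<subseteq> I)"

definition cubic_embedding ::
  "'j set \<Rightarrow> ('j, 'k::comm_ring_1) fseries \<Rightarrow> 'i set \<Rightarrow> ('i, 'k) fseries \<Rightarrow>
   (('j \<Rightarrow> 'k) \<Rightarrow> ('i \<Rightarrow> 'k)) \<Rightarrow> bool" where
  "cubic_embedding J g I f \<phi> \<longleftrightarrow>
     (\<forall>w\<in>fin_vecs J. \<phi> w \<in> fin_vecs I) \<and>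
     (\<forall>v\<in>fin_vecs J. \<forall>w\<in>fin_vecs J. \<phi> (\<lambda>j. v j + w j) = (\<lambda>i. \<phi> v i + \<phi> w i)) \<and>
     (\<forall>c. \<forall>w\<in>fin_vecs J. \<phi> (\<lambda>j. c * w j) = (\<lambda>i. c * \<phi> w i)) \<and>
     (\<forall>w\<in>fin_vecs J. eval_form 3 f (\<phi> w) = eval_form 3 g w)"

text \<open>The cubic space V(r) (indices 0-based: x_i, y_{i,j} for i < r, j any; z_i any).\<close>
datatype vr_idx = Xc nat | Yc nat nat | Zc nat

definition vr_coords :: "nat \<Rightarrow> vr_idx set" where
  "vr_coords r = {Xc i | i. i < r} \<union> {Yc i j | i j. i < r} \<union> range Zc"

text \<open>f_r = 3 sum_i x_i q_i + sum_i z_i^3 with q_i = sum_j y_{i,j}^2, by coefficients.\<close>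
definition f_r :: "nat \<Rightarrow> (vr_idx, 'k::comm_ring_1) fseries" where
  "f_r r M = (if \<exists>i j. i < r \<and> M = {#Xc i, Yc i j, Yc i j#} then 3
              else if \<exists>i. M = {#Zc i, Zc i, Zc i#} then 1 else 0)"

end

(*
  Since rrk g <= r, there are m <= r partial derivatives q_t = d g / d x_(s t) such that every
  d g / d x_j is congruent to sum_t c_jt q_t modulo quadrics of finite strength. Put
  lambda_t = sum_j c_jt x_j and C = g - sum_t lambda_t q_t. Uncovering the coordinates one at a
  time, the increment of C in the direction of x_n is x_n times a quadric of finite strength, plus
  terms x_n p q and x_n^2 l with linear forms p, q, l in x_n, x_(n+1), ... only. Since xyz and x^2 y
  are sums of four cubes of linear forms once 6 is invertible, C is a locally finite sum of cubes of
  linear forms; in the same way, using a square root of -1, every q_t is a locally finite sum of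
  squares. Hence g = 3 sum_t (lambda_t / 3) q_t + (sum of cubes) is the pullback of f_r along a
  linear map.
*)

theory Submission
  imports Defs
begin

section \<open>Evaluating forms at finitely supported vectors\<close>

abbreviation supp :: "('i \<Rightarrow> 'k::zero) \<Rightarrow> 'i set" where
  "supp v \<equiv> {i. v i \<noteq> 0}"

lemma multisets_of_size_def': "{M. size M = n \<and> set_mset M \<subseteq> T} = multisets_of_size T n"
  by (auto simp: multisets_of_size_def)

lemma finite_submultisets: "finite {P. P \<subseteq># M}"
proof (rule finite_subset)
  show "{P. P \<subseteq># M} \<subseteq> (\<Union>n\<le>size M. multisets_of_size (set_mset M) n)"
    by (auto simp: multisets_of_size_def dest: size_mset_mono set_mset_mono)
qed auto

lemma eval_form_superset:
  fixes v :: "'i \<Rightarrow> 'k::field"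
  assumes "finite T" "supp v \<subseteq> T"
  shows "eval_form n f v = (\<Sum>M\<in>multisets_of_size T n. f M * (\<Prod>i\<in>#M. v i))"
  unfolding eval_form_def multisets_of_size_def'
proof (rule sum.mono_neutral_left)
  show "finite (multisets_of_size T n)" using assms(1) ..
  show "\<forall>M\<in>multisets_of_size T n - multisets_of_size (supp v) n. f M * (\<Prod>i\<in>#M. v i) = 0"
    by (auto simp: multisets_of_size_def prod_mset_zero_iff)
qed (use assms in \<open>auto simp: multisets_of_size_def\<close>)

lemma eval_form_eq_sum:
  fixes v :: "'i \<Rightarrow> 'k::field"
  assumes "finite (supp v)" "finite \<M>" "\<And>M. M \<in> \<M> \<Longrightarrow> size M = n"
    and "\<And>M. size M = n \<Longrightarrow> f M \<noteq> 0 \<Longrightarrow> (\<Prod>i\<in>#M. v i) \<noteq> 0 \<Longrightarrow> M \<in> \<M>"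
  shows "eval_form n f v = (\<Sum>M\<in>\<M>. f M * (\<Prod>i\<in>#M. v i))"
proof -
  have "eval_form n f v = (\<Sum>M\<in>multisets_of_size (supp v) n \<inter> \<M>. f M * (\<Prod>i\<in>#M. v i))"
    unfolding eval_form_def multisets_of_size_def'
    by (rule sum.mono_neutral_right[OF finite_multisets_of_size[OF assms(1)]])
      (use assms(4) in \<open>auto simp: multisets_of_size_def prod_mset_zero_iff\<close>)
  also have "\<dots> = (\<Sum>M\<in>\<M>. f M * (\<Prod>i\<in>#M. v i))"
    by (rule sum.mono_neutral_left) (use assms(2,3) in \<open>auto simp: multisets_of_size_def\<close>)
  finally show ?thesis .
qed

lemma eval_form_sum: "eval_form n (\<lambda>M. \<Sum>t\<in>A. h t M) v = (\<Sum>t\<in>A. eval_form n (h t) v)"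
  unfolding eval_form_def sum_distrib_right by (rule sum.swap)

lemma eval_form_scale: "eval_form n (\<lambda>M. c * h M) v = c * eval_form n h v"
  unfolding eval_form_def by (simp add: sum_distrib_left mult_ac)

lemma eval_form_diff:
  "eval_form n (\<lambda>M. h1 M - h2 M) v = eval_form n h1 v - (eval_form n h2 v :: 'k::comm_ring_1)"
  unfolding eval_form_def by (simp add: left_diff_distrib sum_subtractf)

lemma eval_form_0: "eval_form 0 f v = f {#}"
proof -
  have "{M. size M = 0 \<and> set_mset M \<subseteq> supp v} = {{#}}" by auto
  then show ?thesis by (simp add: eval_form_def)
qed

lemma eval_form_zero_vector:
  assumes "0 < n"
  shows "eval_form n f (\<lambda>i. 0::'k::comm_ring_1) = 0"
proof -
  have "{M. size M = n \<and> set_mset M \<subseteq> supp (\<lambda>i. 0::'k)} = {}" using assms by auto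
  then show ?thesis unfolding eval_form_def by (metis sum.empty)
qed

lemma eval_form_fmul:
  fixes v :: "'i \<Rightarrow> 'k::field"
  assumes "homogeneous d a" and "finite (supp v)"
  shows "eval_form (d + e) (fmul a b) v = eval_form d a v * eval_form e b v"
proof -
  let ?A = "multisets_of_size (supp v)"
  have fin: "finite (?A n)" for n using assms(2) ..
  have "eval_form (d + e) (fmul a b) v =
      (\<Sum>M\<in>?A (d + e). \<Sum>P\<in>{P. P \<subseteq># M \<and> size P = d}. a P * b (M - P) * (\<Prod>i\<in>#M. v i))"
    unfolding eval_form_def multisets_of_size_def' fmul_def sum_distrib_right
    by (intro sum.cong refl sum.mono_neutral_right finite_submultisets)
      (use assms(1) in \<open>auto simp: homogeneous_def\<close>)
  also have "\<dots> = (\<Sum>(M, P)\<in>Sigma (?A (d + e)) (\<lambda>M. {P. P \<subseteq># M \<and> size P = d}).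
      a P * b (M - P) * (\<Prod>i\<in>#M. v i))"
    by (rule sum.Sigma[OF fin]) (auto intro: finite_subset[OF _ finite_submultisets])
  also have "\<dots> = (\<Sum>(P, Q)\<in>?A d \<times> ?A e. a P * b Q * ((\<Prod>i\<in>#P. v i) * (\<Prod>i\<in>#Q. v i)))"
  proof (rule sum.reindex_bij_witness[of _ "\<lambda>(P, Q). (P + Q, P)" "\<lambda>(M, P). (P, M - P)"])
    fix MP assume "MP \<in> Sigma (?A (d + e)) (\<lambda>M. {P. P \<subseteq># M \<and> size P = d})"
    then obtain M P where MP: "MP = (M, P)" and M: "M \<in> ?A (d + e)" and P: "P \<subseteq># M" "size P = d"
      by auto
    show "(case case MP of (M, P) \<Rightarrow> (P, M - P) of (P, Q) \<Rightarrow> (P + Q, P)) = MP"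
      using MP P by auto
    have "set_mset P \<subseteq> set_mset M" "set_mset (M - P) \<subseteq> set_mset M" "size (M - P) = e"
      using M P by (auto simp: multisets_of_size_def size_Diff_submset dest: mset_subset_eqD in_diffD)
    then show "(case MP of (M, P) \<Rightarrow> (P, M - P)) \<in> ?A d \<times> ?A e"
      using MP M P by (auto simp: multisets_of_size_def)
    have "(\<Prod>i\<in>#M. v i) = (\<Prod>i\<in>#P. v i) * (\<Prod>i\<in>#(M - P). v i)"
      by (metis P(1) subset_mset.add_diff_inverse image_mset_union prod_mset.union)
    then show "(case case MP of (M, P) \<Rightarrow> (P, M - P) of
        (P, Q) \<Rightarrow> a P * b Q * ((\<Prod>i\<in>#P. v i) * (\<Prod>i\<in>#Q. v i))) =
        (case MP of (M, P) \<Rightarrow> a P * b (M - P) * (\<Prod>i\<in>#M. v i))"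
      using MP by simp
  qed (auto simp: multisets_of_size_def)
  also have "\<dots> = eval_form d a v * eval_form e b v"
    unfolding eval_form_def multisets_of_size_def' sum_product sum.cartesian_product
    by (simp add: mult_ac)
  finally show ?thesis .
qed

lemma bij_betw_add_replicate_mset:
  assumes "k \<notin> S"
  shows "bij_betw (\<lambda>(m, M). M + replicate_mset m k)
    (SIGMA m:{..n}. multisets_of_size S (n - m)) (multisets_of_size (insert k S) n)"
proof (rule bij_betw_byWitness[where f'="\<lambda>M. (count M k, filter_mset (\<lambda>i. i \<noteq> k) M)"])
  show "\<forall>mM\<in>SIGMA m:{..n}. multisets_of_size S (n - m).
      (\<lambda>M. (count M k, filter_mset (\<lambda>i. i \<noteq> k) M)) ((\<lambda>(m, M). M + replicate_mset m k) mM) = mM"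
  proof
    fix mM assume "mM \<in> (SIGMA m:{..n}. multisets_of_size S (n - m))"
    then obtain m M where mM: "mM = (m, M)" and "M \<in> multisets_of_size S (n - m)" by blast
    then have "count M k = 0" using assms by (auto simp: multisets_of_size_def count_eq_zero_iff)
    moreover from this have "filter_mset (\<lambda>i. i \<noteq> k) M = M" by (intro multiset_eqI) simp
    ultimately show "(\<lambda>M. (count M k, filter_mset (\<lambda>i. i \<noteq> k) M))
        ((\<lambda>(m, M). M + replicate_mset m k) mM) = mM"
      using mM by simp
  qed
  have split: "filter_mset (\<lambda>i. i \<noteq> k) M + replicate_mset (count M k) k = M" for M
    by (rule multiset_eqI) simp
  then show "\<forall>M\<in>multisets_of_size (insert k S) n.
      (\<lambda>(m, M). M + replicate_mset m k) ((\<lambda>M. (count M k, filter_mset (\<lambda>i. i \<noteq> k) M)) M) = M"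
    by simp
  show "(\<lambda>M. (count M k, filter_mset (\<lambda>i. i \<noteq> k) M)) ` multisets_of_size (insert k S) n \<subseteq>
      (SIGMA m:{..n}. multisets_of_size S (n - m))"
  proof (rule image_subsetI)
    fix M assume "M \<in> multisets_of_size (insert k S) n"
    then have "size M = n" "set_mset M \<subseteq> insert k S" by (simp_all add: multisets_of_size_def)
    moreover have "size (filter_mset (\<lambda>i. i \<noteq> k) M) + count M k = size M"
      using arg_cong[OF split[of M], of size] by simp
    ultimately show "(count M k, filter_mset (\<lambda>i. i \<noteq> k) M) \<in> (SIGMA m:{..n}. multisets_of_size S (n - m))"
      by (auto simp: multisets_of_size_def)
  qed
  show "(\<lambda>(m, M). M + replicate_mset m k) ` (SIGMA m:{..n}. multisets_of_size S (n - m)) \<subseteq>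
      multisets_of_size (insert k S) n"
    by (auto simp: multisets_of_size_def subset_iff split: if_splits)
qed

lemma eval_form_fun_upd:
  fixes y :: "'i \<Rightarrow> 'k::field"
  assumes fin: "finite (supp y)" and yk: "y k = 0"
  shows "eval_form n f (y(k := x)) =
    (\<Sum>m\<le>n. x ^ m * eval_form (n - m) (\<lambda>M. f (M + replicate_mset m k)) y)"
proof -
  let ?A = "multisets_of_size (supp y)"
  have "eval_form n f (y(k := x)) =
      (\<Sum>M\<in>multisets_of_size (insert k (supp y)) n. f M * (\<Prod>i\<in>#M. (y(k := x)) i))"
    by (rule eval_form_superset) (use fin in auto)
  also have "\<dots> = (\<Sum>(m, M)\<in>(SIGMA m:{..n}. ?A (n - m)).
      f (M + replicate_mset m k) * (\<Prod>i\<in>#M + replicate_mset m k. (y(k := x)) i))"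
    using bij_betw_add_replicate_mset[of k "supp y" n] yk
    by (simp add: sum.reindex_bij_betw[symmetric] case_prod_beta)
  also have "\<dots> = (\<Sum>(m, M)\<in>(SIGMA m:{..n}. ?A (n - m)).
      x ^ m * (f (M + replicate_mset m k) * (\<Prod>i\<in>#M. y i)))"
  proof (rule sum.cong[OF refl], clarify)
    fix m M assume "M \<in> ?A (n - m)"
    then have "k \<notin># M" using yk by (auto simp: multisets_of_size_def)
    then have "(\<Prod>i\<in>#M. (y(k := x)) i) = (\<Prod>i\<in>#M. y i)"
      by (intro arg_cong[where f=prod_mset] image_mset_cong) auto
    then show "f (M + replicate_mset m k) * (\<Prod>i\<in>#M + replicate_mset m k. (y(k := x)) i) =
        x ^ m * (f (M + replicate_mset m k) * (\<Prod>i\<in>#M. y i))"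
      by (simp add: mult_ac)
  qed
  also have "\<dots> = (\<Sum>m\<le>n. \<Sum>M\<in>?A (n - m). x ^ m * (f (M + replicate_mset m k) * (\<Prod>i\<in>#M. y i)))"
    by (rule sum.Sigma[symmetric]) (use fin in auto)
  also have "\<dots> = (\<Sum>m\<le>n. x ^ m * eval_form (n - m) (\<lambda>M. f (M + replicate_mset m k)) y)"
    by (simp add: eval_form_def multisets_of_size_def' sum_distrib_left)
  finally show ?thesis .
qed

lemma eval_form_2_fun_upd:
  fixes y :: "'i \<Rightarrow> 'k::field"
  assumes "finite (supp y)" "y k = 0"
  shows "eval_form 2 f (y(k := x)) =
    eval_form 2 f y + x * eval_form 1 (\<lambda>M. f (M + {#k#})) y + x^2 * f {#k, k#}"
  unfolding eval_form_fun_upd[OF assms] by (simp add: eval_form_0 eval_nat_numeral)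

lemma eval_form_3_fun_upd:
  fixes y :: "'i \<Rightarrow> 'k::field"
  assumes "finite (supp y)" "y k = 0"
  shows "eval_form 3 f (y(k := x)) = eval_form 3 f y + x * eval_form 2 (\<lambda>M. f (M + {#k#})) y
    + x^2 * eval_form 1 (\<lambda>M. f (M + {#k, k#})) y + x^3 * f {#k, k, k#}"
  unfolding eval_form_fun_upd[OF assms] by (simp add: eval_form_0 eval_nat_numeral add_ac)

lemma eval_form_fderiv:
  fixes y :: "'i \<Rightarrow> 'k::field"
  assumes "y k = 0"
  shows "eval_form n (fderiv k f) y = eval_form n (\<lambda>M. f (M + {#k#})) y"
  unfolding eval_form_def
proof (rule sum.cong[OF refl])
  fix M assume "M \<in> {M. size M = n \<and> set_mset M \<subseteq> supp y}"
  then have "count M k = 0" using assms by (auto simp: count_eq_zero_iff)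
  then show "fderiv k f M * (\<Prod>i\<in>#M. y i) = f (M + {#k#}) * (\<Prod>i\<in>#M. y i)"
    by (simp add: fderiv_def)
qed

section \<open>Linear forms and truncated vectors\<close>

definition lin_comb :: "('i \<Rightarrow> 'k) \<Rightarrow> ('i \<Rightarrow> 'k::comm_ring_1) \<Rightarrow> 'k" where
  "lin_comb a v = (\<Sum>i\<in>supp v. a i * v i)"

lemma lin_comb_superset:
  assumes "finite T" "supp v \<subseteq> T"
  shows "lin_comb a v = (\<Sum>i\<in>T. a i * v i)"
  unfolding lin_comb_def by (rule sum.mono_neutral_left) (use assms in auto)

lemma lin_comb_fun_upd:
  fixes y :: "'i \<Rightarrow> 'k::comm_ring_1"
  assumes "finite (supp y)" "y k = 0"
  shows "lin_comb a (y(k := x)) = lin_comb a y + x * a k"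
proof -
  have "lin_comb a (y(k := x)) = (\<Sum>i\<in>insert k (supp y). a i * (y(k := x)) i)"
    by (rule lin_comb_superset) (use assms in auto)
  also have "\<dots> = a k * x + (\<Sum>i\<in>supp y. a i * y i)"
    using assms by (auto intro!: sum.cong)
  finally show ?thesis by (simp add: lin_comb_def mult.commute)
qed

lemma eval_form_1: "eval_form 1 f v = lin_comb (\<lambda>i. f {#i#}) v"
proof -
  have "{M. size M = 1 \<and> set_mset M \<subseteq> supp v} = (\<lambda>i. {#i#}) ` supp v"
    by (auto dest!: size_1_singleton_mset[unfolded One_nat_def])
  then show ?thesis
    unfolding eval_form_def lin_comb_def by (simp add: sum.reindex inj_on_def)
qed

definition lin_functional :: "(('i \<Rightarrow> 'k::field) \<Rightarrow> 'k) \<Rightarrow> bool" where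
  "lin_functional l \<longleftrightarrow>
    (\<forall>u v. finite (supp u) \<longrightarrow> finite (supp v) \<longrightarrow> l (\<lambda>i. u i + v i) = l u + l v) \<and>
    (\<forall>c u. finite (supp u) \<longrightarrow> l (\<lambda>i. c * u i) = c * l u)"

lemma lin_functional_zero:
  fixes l :: "('i \<Rightarrow> 'k::field) \<Rightarrow> 'k"
  assumes "lin_functional l"
  shows "l (\<lambda>i. 0) = 0"
proof -
  have "\<And>c u. finite (supp u) \<Longrightarrow> l (\<lambda>i. c * u i) = c * l u"
    using assms by (simp add: lin_functional_def)
  from this[of "\<lambda>i. 0" 0] have "l (\<lambda>i. 0 * 0) = 0 * l (\<lambda>i. 0)" by simp
  then show ?thesis by simp
qed

lemma lin_functional_lin_comb:
  fixes a :: "'i \<Rightarrow> 'k::field"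
  shows "lin_functional (lin_comb a)"
  unfolding lin_functional_def
proof (intro conjI allI impI)
  fix u v :: "'i \<Rightarrow> 'k" assume fin: "finite (supp u)" "finite (supp v)"
  have "lin_comb a u + lin_comb a v =
      (\<Sum>i\<in>supp u \<union> supp v. a i * u i) + (\<Sum>i\<in>supp u \<union> supp v. a i * v i)"
    using fin by (simp add: lin_comb_superset[of "supp u \<union> supp v"])
  also have "\<dots> = lin_comb a (\<lambda>i. u i + v i)"
    using fin by (subst lin_comb_superset[of "supp u \<union> supp v"])
      (auto simp: distrib_left sum.distrib)
  finally show "lin_comb a (\<lambda>i. u i + v i) = lin_comb a u + lin_comb a v" ..
next
  fix c and u :: "'i \<Rightarrow> 'k" assume "finite (supp u)"
  then show "lin_comb a (\<lambda>i. c * u i) = c * lin_comb a u"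
    by (subst lin_comb_superset[of "supp u"]) (auto simp: lin_comb_def sum_distrib_left mult_ac)
qed

lemma lin_functional_eval_form_1: "lin_functional (eval_form 1 f)"
  unfolding eval_form_1[abs_def] by (rule lin_functional_lin_comb)

definition tail_vec :: "nat \<Rightarrow> (nat \<Rightarrow> 'k::zero) \<Rightarrow> nat \<Rightarrow> 'k" where
  "tail_vec n w i = (if n \<le> i then w i else 0)"

lemma tail_vec_0 [simp]: "tail_vec 0 w = w"
  by (simp add: tail_vec_def fun_eq_iff)

lemma tail_vec_at [simp]: "tail_vec n w n = w n"
  by (simp add: tail_vec_def)

lemma tail_vec_Suc_at [simp]: "tail_vec (Suc n) w n = 0"
  by (simp add: tail_vec_def)

lemma tail_vec_Suc: "tail_vec n w = (tail_vec (Suc n) w)(n := w n)"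
  by (auto simp: tail_vec_def fun_eq_iff)

lemma tail_vec_tail_vec: "n \<le> m \<Longrightarrow> tail_vec m (tail_vec n w) = tail_vec m w"
  by (auto simp: tail_vec_def fun_eq_iff)

lemma tail_vec_eq_zero: "supp w \<subseteq> {..<N} \<Longrightarrow> N \<le> n \<Longrightarrow> tail_vec n w = (\<lambda>i. 0)"
  by (fastforce simp: tail_vec_def fun_eq_iff)

lemma tail_vec_add: "tail_vec n (\<lambda>i. u i + v i :: 'k::field) = (\<lambda>i. tail_vec n u i + tail_vec n v i)"
  by (rule ext) (simp add: tail_vec_def)

lemma tail_vec_scale: "tail_vec n (\<lambda>i. c * u i :: 'k::field) = (\<lambda>i. c * tail_vec n u i)"
  by (rule ext) (simp add: tail_vec_def)

lemma finite_supp_tail_vec: "finite (supp w) \<Longrightarrow> finite (supp (tail_vec n w))"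
  by (rule finite_subset[of _ "supp w"]) (auto simp: tail_vec_def)

definition tail_linear :: "nat \<Rightarrow> ((nat \<Rightarrow> 'k::field) \<Rightarrow> 'k) \<Rightarrow> bool" where
  "tail_linear n l \<longleftrightarrow> lin_functional l \<and> (\<forall>w. l (tail_vec n w) = l w)"

lemma tail_linear_vanishes:
  assumes "tail_linear n l" "supp w \<subseteq> {..<N}" "N \<le> n"
  shows "l w = 0"
  using assms tail_vec_eq_zero[OF assms(2,3)] lin_functional_zero
  unfolding tail_linear_def by metis

lemma tail_linear_comp_tail_vec:
  fixes l :: "(nat \<Rightarrow> 'k::field) \<Rightarrow> 'k"
  assumes "lin_functional l" "n \<le> m"
  shows "tail_linear n (\<lambda>w. l (tail_vec m w))"
  unfolding tail_linear_def lin_functional_def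
proof (intro conjI allI impI)
  fix u v :: "nat \<Rightarrow> 'k" assume "finite (supp u)" "finite (supp v)"
  then show "l (tail_vec m (\<lambda>i. u i + v i)) = l (tail_vec m u) + l (tail_vec m v)"
    using assms(1) finite_supp_tail_vec unfolding lin_functional_def tail_vec_add by blast
next
  fix c and u :: "nat \<Rightarrow> 'k" assume "finite (supp u)"
  then show "l (tail_vec m (\<lambda>i. c * u i)) = c * l (tail_vec m u)"
    using assms(1) finite_supp_tail_vec unfolding lin_functional_def tail_vec_scale by blast
qed (use assms(2) in \<open>simp add: tail_vec_tail_vec\<close>)

lemma tail_linear_coordinate: "tail_linear n (\<lambda>w. w n)"
  by (simp add: tail_linear_def lin_functional_def)

lemma tail_linear_add: "tail_linear n l \<Longrightarrow> tail_linear n l' \<Longrightarrow> tail_linear n (\<lambda>w. l w + l' w)"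
  by (simp add: tail_linear_def lin_functional_def distrib_left)

lemma tail_linear_diff: "tail_linear n l \<Longrightarrow> tail_linear n l' \<Longrightarrow> tail_linear n (\<lambda>w. l w - l' w)"
  by (simp add: tail_linear_def lin_functional_def algebra_simps)

lemma tail_linear_scale: "tail_linear n l \<Longrightarrow> tail_linear n (\<lambda>w. c * l w)"
  by (simp add: tail_linear_def lin_functional_def algebra_simps)

lemma tail_linear_sum:
  "finite A \<Longrightarrow> (\<And>a. a \<in> A \<Longrightarrow> tail_linear n (l a)) \<Longrightarrow> tail_linear n (\<lambda>w. \<Sum>a\<in>A. l a w)"
proof (induction A rule: finite_induct)
  case empty
  then show ?case by (simp add: tail_linear_def lin_functional_def)
next
  case (insert a A)
  then show ?case by (simp add: tail_linear_add)
qed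

section \<open>Locally finite sums of powers of linear forms\<close>

definition tail_power_sum :: "nat \<Rightarrow> nat \<Rightarrow> ((nat \<Rightarrow> 'k::field) \<Rightarrow> 'k) \<Rightarrow> bool" where
  "tail_power_sum n d F \<longleftrightarrow> (\<exists>cs. (\<forall>c\<in>set cs. tail_linear n c) \<and>
     (\<forall>w. finite (supp w) \<longrightarrow> F w = (\<Sum>c\<leftarrow>cs. c w ^ d)))"

lemma tail_power_sum_cong:
  "tail_power_sum n d F \<Longrightarrow> (\<And>w. finite (supp w) \<Longrightarrow> F w = G w) \<Longrightarrow> tail_power_sum n d G"
  unfolding tail_power_sum_def by metis

lemma tail_power_sum_add:
  assumes "tail_power_sum n d F" "tail_power_sum n d G"
  shows "tail_power_sum n d (\<lambda>w. F w + G w)"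
proof -
  obtain cs ds where "\<forall>c\<in>set cs. tail_linear n c" "\<forall>w. finite (supp w) \<longrightarrow> F w = (\<Sum>c\<leftarrow>cs. c w ^ d)"
    "\<forall>c\<in>set ds. tail_linear n c" "\<forall>w. finite (supp w) \<longrightarrow> G w = (\<Sum>c\<leftarrow>ds. c w ^ d)"
    using assms unfolding tail_power_sum_def by blast
  then show ?thesis
    unfolding tail_power_sum_def by (intro exI[of _ "cs @ ds"]) auto
qed

lemma tail_power_sum_sum:
  "finite A \<Longrightarrow> (\<And>a. a \<in> A \<Longrightarrow> tail_power_sum n d (F a)) \<Longrightarrow>
    tail_power_sum n d (\<lambda>w. \<Sum>a\<in>A. F a w)"
proof (induction A rule: finite_induct)
  case empty
  show ?case unfolding tail_power_sum_def by (intro exI[of _ "[]"]) simp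
next
  case (insert a A)
  then show ?case by (simp add: tail_power_sum_add)
qed

lemma tail_power_sum_3_triple_product:
  fixes X p q :: "(nat \<Rightarrow> 'k::field) \<Rightarrow> 'k"
  assumes "(6::'k) \<noteq> 0" "tail_linear n X" "tail_linear n p" "tail_linear n q"
  shows "tail_power_sum n 3 (\<lambda>w. X w * p w * q w)"
proof -
  define h :: 'k where "h = 1 / 6"
  have h: "6 * h = 1" using assms(1) by (simp add: h_def)
  define cs where "cs = [\<lambda>w. (3*h) * X w + h * p w + (3*h) * q w,
    \<lambda>w. (-3*h) * X w + (-h) * p w + (3*h) * q w, \<lambda>w. (-3*h) * X w + h * p w + (-3*h) * q w,
    \<lambda>w. (3*h) * X w + (-h) * p w + (-3*h) * q w]"
  have "X w * p w * q w = (\<Sum>c\<leftarrow>cs. c w ^ 3)" for w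
    using h unfolding cs_def by (simp only: list.map sum_list.Cons sum_list.Nil) algebra
  moreover have "\<forall>c\<in>set cs. tail_linear n c"
    unfolding cs_def list.set ball_simps using assms(2-4)
    by (intro conjI TrueI tail_linear_add tail_linear_scale)
  ultimately show ?thesis
    unfolding tail_power_sum_def by blast
qed

lemma tail_power_sum_3_square_mult:
  fixes X L :: "(nat \<Rightarrow> 'k::field) \<Rightarrow> 'k"
  assumes "(6::'k) \<noteq> 0" "tail_linear n X" "tail_linear n L"
  shows "tail_power_sum n 3 (\<lambda>w. X w ^ 2 * L w)"
proof -
  define h :: 'k where "h = 1 / 6"
  have h: "6 * h = 1" using assms(1) by (simp add: h_def)
  define cs where "cs = [\<lambda>w. X w + h * L w, \<lambda>w. (-1) * X w + h * L w,
    \<lambda>w. (-h) * L w, \<lambda>w. (-h) * L w]"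
  have "X w ^ 2 * L w = (\<Sum>c\<leftarrow>cs. c w ^ 3)" for w
    using h unfolding cs_def by (simp only: list.map sum_list.Cons sum_list.Nil) algebra
  moreover have "\<forall>c\<in>set cs. tail_linear n c"
    unfolding cs_def list.set ball_simps using assms(2,3)
    by (intro conjI TrueI tail_linear_add tail_linear_scale)
  ultimately show ?thesis
    unfolding tail_power_sum_def by blast
qed

lemma tail_power_sum_2_product:
  fixes X L :: "(nat \<Rightarrow> 'k::field) \<Rightarrow> 'k" and ii :: 'k
  assumes "(2::'k) \<noteq> 0" "ii * ii = -1" "tail_linear n X" "tail_linear n L"
  shows "tail_power_sum n 2 (\<lambda>w. X w * L w)"
proof -
  define h :: 'k where "h = 1 / 2"
  have h: "2 * h = 1" using assms(1) by (simp add: h_def)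
  define cs where "cs = [\<lambda>w. h * X w + h * L w, \<lambda>w. (ii*h) * X w + (-ii*h) * L w]"
  have "(h*a + h*l)^2 + ((ii*h)*a + (-ii*h)*l)^2 = (2*h)^2 * (a*l) + (ii*ii + 1) * (h*(a - l))^2"
    for a l :: 'k
    by algebra
  then have "X w * L w = (\<Sum>c\<leftarrow>cs. c w ^ 2)" for w
    unfolding cs_def h assms(2) by simp
  moreover have "\<forall>c\<in>set cs. tail_linear n c"
    unfolding cs_def list.set ball_simps using assms(3,4)
    by (intro conjI TrueI tail_linear_add tail_linear_scale)
  ultimately show ?thesis
    unfolding tail_power_sum_def by blast
qed

definition power_sum_repr :: "nat \<Rightarrow> ('z \<Rightarrow> ('i \<Rightarrow> 'k::field) \<Rightarrow> 'k) \<Rightarrow> (('i \<Rightarrow> 'k) \<Rightarrow> 'k) \<Rightarrow> bool" where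
  "power_sum_repr d c F \<longleftrightarrow> (\<forall>z. lin_functional (c z)) \<and>
     (\<forall>w. finite (supp w) \<longrightarrow> finite {z. c z w \<noteq> 0} \<and> F w = (\<Sum>z | c z w \<noteq> 0. c z w ^ d))"

lemma tail_vec_telescope:
  fixes F :: "(nat \<Rightarrow> 'k::field) \<Rightarrow> 'k"
  assumes "supp w \<subseteq> {..<N}" "F (\<lambda>i. 0) = 0"
  shows "F w = (\<Sum>n<N. F (tail_vec n w) - F (tail_vec (Suc n) w))"
  unfolding sum_lessThan_telescope'[of "\<lambda>n. F (tail_vec n w)"] tail_vec_eq_zero[OF assms(1) order_refl]
  by (simp add: assms(2))

definition enumerate_lists :: "(nat \<Rightarrow> ((nat \<Rightarrow> 'k) \<Rightarrow> 'k) list) \<Rightarrow> nat \<Rightarrow> (nat \<Rightarrow> 'k) \<Rightarrow> 'k::zero"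
  where "enumerate_lists cs z = (case prod_decode z of
    (n, m) \<Rightarrow> if m < length (cs n) then cs n ! m else (\<lambda>w. 0))"

lemma enumerate_lists_prod_encode:
  "enumerate_lists cs (prod_encode (n, m)) = (if m < length (cs n) then cs n ! m else (\<lambda>w. 0))"
  by (simp add: enumerate_lists_def prod_encode_inverse)

text \<open>A form in cs n vanishes at w as soon as supp w lies below n, so at a finitely supported
  vector only finitely many of the enumerated forms are nonzero.\<close>

lemma power_sum_repr_enumerate_lists:
  fixes cs :: "nat \<Rightarrow> ((nat \<Rightarrow> 'k::field) \<Rightarrow> 'k) list"
  assumes "0 < d" and cs: "\<And>n c. c \<in> set (cs n) \<Longrightarrow> tail_linear n c"
    and F: "\<And>w N. supp w \<subseteq> {..<N} \<Longrightarrow> F w = (\<Sum>n<N. \<Sum>c\<leftarrow>cs n. c w ^ d)"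
  shows "power_sum_repr d (enumerate_lists cs) F"
proof -
  let ?c = "enumerate_lists cs"
  have decode: "\<exists>n m. z = prod_encode (n, m)" for z
    by (metis prod_decode_inverse surj_pair)
  have "lin_functional (?c z)" for z
    using decode[of z] cs[OF nth_mem]
    by (auto simp: enumerate_lists_prod_encode tail_linear_def lin_functional_def)
  moreover have "finite {z. ?c z w \<noteq> 0} \<and> F w = (\<Sum>z | ?c z w \<noteq> 0. ?c z w ^ d)"
    if fin: "finite (supp w)" for w
  proof -
    obtain N where N: "supp w \<subseteq> {..<N}" using finite_nat_bounded[OF fin] by blast
    define Z where "Z = prod_encode ` (SIGMA n:{..<N}. {..<length (cs n)})"
    have "finite Z" by (simp add: Z_def)
    have nonzero: "{z. ?c z w \<noteq> 0} \<subseteq> Z"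
    proof
      fix z assume "z \<in> {z. ?c z w \<noteq> 0}"
      moreover obtain n m where z: "z = prod_encode (n, m)" using decode by blast
      ultimately have m: "m < length (cs n)" and "(cs n ! m) w \<noteq> 0"
        by (auto simp: enumerate_lists_prod_encode split: if_splits)
      then have "n < N"
        using tail_linear_vanishes[OF cs[OF nth_mem[OF m]] N] by (meson not_less)
      with m show "z \<in> Z" by (auto simp: Z_def z)
    qed
    have "F w = (\<Sum>n<N. \<Sum>m<length (cs n). ?c (prod_encode (n, m)) w ^ d)"
      by (simp add: F[OF N] enumerate_lists_prod_encode sum_list_sum_nth atLeast0LessThan)
    also have "\<dots> = (\<Sum>z\<in>Z. ?c z w ^ d)"
      unfolding Z_def by (simp add: sum.reindex inj_on_def sum.Sigma)
    also have "\<dots> = (\<Sum>z | ?c z w \<noteq> 0. ?c z w ^ d)"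
      by (rule sum.mono_neutral_right) (use \<open>finite Z\<close> nonzero assms(1) in auto)
    finally show ?thesis using \<open>finite Z\<close> nonzero finite_subset by blast
  qed
  ultimately show ?thesis
    unfolding power_sum_repr_def by blast
qed

lemma power_sum_repr_telescoping:
  fixes F :: "(nat \<Rightarrow> 'k::field) \<Rightarrow> 'k"
  assumes "0 < d" "F (\<lambda>i. 0) = 0"
    and "\<And>n. tail_power_sum n d (\<lambda>w. F (tail_vec n w) - F (tail_vec (Suc n) w))"
  shows "\<exists>c :: nat \<Rightarrow> _. power_sum_repr d c F"
proof -
  have "\<forall>n. \<exists>cs. (\<forall>c\<in>set cs. tail_linear n c) \<and> (\<forall>w. finite (supp w) \<longrightarrow>
      F (tail_vec n w) - F (tail_vec (Suc n) w) = (\<Sum>c\<leftarrow>cs. c w ^ d))"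
    using assms(3) unfolding tail_power_sum_def by blast
  then obtain cs where cs_lin: "\<And>n c. c \<in> set (cs n) \<Longrightarrow> tail_linear n c"
    and cs_sum: "\<And>n w. finite (supp w) \<Longrightarrow>
      F (tail_vec n w) - F (tail_vec (Suc n) w) = (\<Sum>c\<leftarrow>cs n. c w ^ d)"
    by metis
  have F_sum: "F w = (\<Sum>n<N. \<Sum>c\<leftarrow>cs n. c w ^ d)" if "supp w \<subseteq> {..<N}" for w N
  proof -
    have "finite (supp w)" using that by (rule finite_subset) simp
    then show ?thesis using tail_vec_telescope[of w N F, OF that assms(2)] cs_sum by simp
  qed
  have "power_sum_repr d (enumerate_lists cs) F"
    by (rule power_sum_repr_enumerate_lists[OF assms(1) cs_lin F_sum])
  then show ?thesis by blast
qed

section \<open>Finite strength and residual rank\<close>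

lemma fin_strength_quadric_iff:
  "fin_strength_quadric (q :: ('i, 'k::comm_ring_1) fseries) \<longleftrightarrow> homogeneous 2 q \<and>
     (\<exists>(s::nat) a b. (\<forall>t<s. homogeneous 1 (a t) \<and> homogeneous 1 (b t)) \<and>
        q = (\<lambda>M. \<Sum>t<s. fmul (a t) (b t) M))"
proof -
  have degree_1: "(\<exists>d e. 0 < d \<and> d < (2::nat) \<and> 0 < e \<and> e < 2 \<and> homogeneous d A \<and> homogeneous e B)
      \<longleftrightarrow> homogeneous 1 A \<and> homogeneous 1 B" for A B :: "('i, 'k) fseries"
  proof
    assume "\<exists>d e. 0 < d \<and> d < (2::nat) \<and> 0 < e \<and> e < 2 \<and> homogeneous d A \<and> homogeneous e B"
    then obtain d e where "0 < d" "d < (2::nat)" "0 < e" "e < 2" "homogeneous d A" "homogeneous e B"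
      by blast
    moreover from calculation have "d = 1" "e = 1" by auto
    ultimately show "homogeneous 1 A \<and> homogeneous 1 B" by simp
  qed (intro exI[of _ 1]; simp)
  let ?S = "{s::nat. \<exists>a b. (\<forall>t<s. \<exists>d e. 0 < d \<and> d < (2::nat) \<and> 0 < e \<and> e < 2 \<and>
      homogeneous d (a t) \<and> homogeneous e (b t)) \<and> q = (\<lambda>M. \<Sum>t<s. fmul (a t) (b t) M)}"
  have "strength 2 q < \<infinity> \<longleftrightarrow> (\<exists>s\<in>?S. enat s < \<infinity>)"
    unfolding strength_def by (rule INF_less_iff)
  also have "\<dots> \<longleftrightarrow> ?S \<noteq> {}"
    using ex_in_conv[of ?S] by simp
  also have "\<dots> \<longleftrightarrow> (\<exists>(s::nat) a b. (\<forall>t<s. homogeneous 1 (a t) \<and> homogeneous 1 (b t)) \<and>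
      q = (\<lambda>M. \<Sum>t<s. fmul (a t) (b t) M))"
    unfolding ex_in_conv[symmetric] mem_Collect_eq degree_1 ..
  finally show ?thesis
    unfolding fin_strength_quadric_def by blast
qed

lemma fin_strength_quadric_zero: "fin_strength_quadric (\<lambda>M. 0 :: 'k::comm_ring_1)"
  unfolding fin_strength_quadric_iff by (auto simp: homogeneous_def intro!: exI[of _ 0])

lemma fin_strength_quadric_scale:
  assumes "fin_strength_quadric (q :: ('i, 'k::comm_ring_1) fseries)"
  shows "fin_strength_quadric (\<lambda>M. c * q M)"
proof -
  obtain s :: nat and a b where ab: "\<forall>t<s. homogeneous 1 (a t) \<and> homogeneous 1 (b t)"
    and q: "q = (\<lambda>M. \<Sum>t<s. fmul (a t) (b t) M)" and "homogeneous 2 q"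
    using assms unfolding fin_strength_quadric_iff by blast
  show ?thesis
    unfolding fin_strength_quadric_iff
  proof (intro conjI exI)
    show "homogeneous 2 (\<lambda>M. c * q M)"
      using \<open>homogeneous 2 q\<close> by (simp add: homogeneous_def)
    show "\<forall>t<s. homogeneous 1 (\<lambda>P. c * a t P) \<and> homogeneous 1 (b t)"
      using ab by (simp add: homogeneous_def)
    show "(\<lambda>M. c * q M) = (\<lambda>M. \<Sum>t<s. fmul (\<lambda>P. c * a t P) (b t) M)"
      unfolding q fmul_def by (simp add: sum_distrib_left mult_ac)
  qed
qed

lemma fin_strength_quadric_eval:
  fixes q :: "('i, 'k::field) fseries"
  assumes "fin_strength_quadric q"
  shows "\<exists>(s::nat) a b. \<forall>v. finite (supp v) \<longrightarrow>
    eval_form 2 q v = (\<Sum>t<s. eval_form 1 (a t) v * eval_form 1 (b t) v)"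
proof -
  obtain s :: nat and a b where ab: "\<forall>t<s. homogeneous 1 (a t) \<and> homogeneous 1 (b t)"
    and q: "q = (\<lambda>M. \<Sum>t<s. fmul (a t) (b t) M)"
    using assms unfolding fin_strength_quadric_iff by blast
  have "\<forall>v. finite (supp v) \<longrightarrow>
      eval_form 2 q v = (\<Sum>t<s. eval_form 1 (a t) v * eval_form 1 (b t) v)"
  proof (intro allI impI)
    fix v :: "'i \<Rightarrow> 'k" assume "finite (supp v)"
    then show "eval_form 2 q v = (\<Sum>t<s. eval_form 1 (a t) v * eval_form 1 (b t) v)"
      unfolding q eval_form_sum using eval_form_fmul[of 1 _ v 1] ab by (simp add: numeral_2_eq_2)
  qed
  then show ?thesis by (rule exI[of _ s, OF exI[of _ a, OF exI[of _ b]]])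
qed

definition partials_independent :: "('i, 'k::field) fseries \<Rightarrow> 'i set \<Rightarrow> bool" where
  "partials_independent f S \<longleftrightarrow>
    (\<forall>c. fin_strength_quadric (\<lambda>M. \<Sum>i\<in>S. c i * fderiv i f M) \<longrightarrow> (\<forall>i\<in>S. c i = 0))"

lemma fderiv_eq_0_outside:
  assumes "cubic_form J g" "j \<notin> J"
  shows "fderiv j g = (\<lambda>M. 0)"
proof
  fix M
  have "g (add_mset j M) = 0"
    using assms unfolding cubic_form_def by (metis insert_subset set_mset_add_mset_insert)
  then show "fderiv j g M = 0" by (simp add: fderiv_def)
qed

lemma fin_strength_relation_if_dependent:
  fixes f :: "('i, 'k::field) fseries"
  assumes "finite S" "j \<notin> S" "partials_independent f S"
    and "\<not> partials_independent f (insert j S)"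
  shows "\<exists>c. fin_strength_quadric (\<lambda>M. fderiv j f M - (\<Sum>i\<in>S. c i * fderiv i f M))"
proof -
  obtain c where c: "fin_strength_quadric (\<lambda>M. \<Sum>i\<in>insert j S. c i * fderiv i f M)"
    and nonzero: "\<exists>i\<in>insert j S. c i \<noteq> 0"
    using assms(4) unfolding partials_independent_def by blast
  have insert: "(\<Sum>i\<in>insert j S. c i * fderiv i f M) =
      c j * fderiv j f M + (\<Sum>i\<in>S. c i * fderiv i f M)" for M
    using assms(1,2) by simp
  have "c j \<noteq> 0"
  proof
    assume "c j = 0"
    then have "fin_strength_quadric (\<lambda>M. \<Sum>i\<in>S. c i * fderiv i f M)" using c by (simp add: insert)
    then show False using assms(3) nonzero \<open>c j = 0\<close> unfolding partials_independent_def by auto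
  qed
  have eq: "(\<lambda>M. fderiv j f M - (\<Sum>i\<in>S. (- c i / c j) * fderiv i f M)) =
      (\<lambda>M. (1 / c j) * (\<Sum>i\<in>insert j S. c i * fderiv i f M))"
  proof
    fix M
    have "(\<Sum>i\<in>S. (- c i / c j) * fderiv i f M) = - (1 / c j) * (\<Sum>i\<in>S. c i * fderiv i f M)"
      by (simp add: sum_distrib_left)
    then show "fderiv j f M - (\<Sum>i\<in>S. (- c i / c j) * fderiv i f M) =
        (1 / c j) * (\<Sum>i\<in>insert j S. c i * fderiv i f M)"
      using \<open>c j \<noteq> 0\<close> by (simp add: insert field_simps)
  qed
  have "fin_strength_quadric (\<lambda>M. fderiv j f M - (\<Sum>i\<in>S. (- c i / c j) * fderiv i f M))"
    unfolding eq by (rule fin_strength_quadric_scale[OF c])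
  then show ?thesis by (rule exI[of _ "\<lambda>i. - c i / c j"])
qed

lemma fin_strength_relations_maximal_independent:
  fixes g :: "('i, 'k::field) fseries"
  assumes "cubic_form J g" "finite S" "S \<subseteq> J" "partials_independent g S"
    and maximal: "\<And>j. j \<in> J - S \<Longrightarrow> \<not> partials_independent g (insert j S)"
  shows "\<exists>c. fin_strength_quadric (\<lambda>M. fderiv j g M - (\<Sum>i\<in>S. c i * fderiv i g M))"
proof (cases "j \<in> S \<or> j \<notin> J")
  case True
  have "(\<Sum>i\<in>S. (if i = j then 1 else 0) * fderiv i g M) = (if j \<in> S then fderiv j g M else 0)" for M
    using assms(2) by (simp add: sum.delta[symmetric] if_distrib[of "\<lambda>x. x * _"] cong: if_cong)
  with True have "(\<lambda>M. fderiv j g M - (\<Sum>i\<in>S. (if i = j then 1 else 0) * fderiv i g M)) = (\<lambda>M. 0)"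
    using fderiv_eq_0_outside[OF assms(1), of j] by auto
  then show ?thesis
    using fin_strength_quadric_zero by (intro exI[of _ "\<lambda>i. if i = j then 1 else 0"]) simp
next
  case False
  then show ?thesis
    using assms(2,4) maximal[of j] by (intro fin_strength_relation_if_dependent) auto
qed

lemma rrk_fin_strength_relations:
  fixes g :: "('i, 'k::field) fseries"
  assumes "cubic_form J g" "rrk J g \<le> enat r"
  shows "\<exists>m\<le>r. \<exists>s cc. \<forall>j.
    fin_strength_quadric (\<lambda>M. fderiv j g M - (\<Sum>t<m. cc j t * fderiv (s t) g M))"
proof -
  let ?indep = "\<lambda>S. finite S \<and> S \<subseteq> J \<and> partials_independent g S"
  have card_le: "card S \<le> r" if "?indep S" for S
  proof -
    have "enat (card S) \<le> rrk J g"
      unfolding rrk_def by (rule SUP_upper) (use that in \<open>auto simp: partials_independent_def\<close>)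
    then have "enat (card S) \<le> enat r" using assms(2) by (rule order_trans)
    then show ?thesis by simp
  qed
  obtain S where S: "?indep S" and max: "\<And>S'. ?indep S' \<Longrightarrow> card S' \<le> card S"
    using Lattices_Big.ex_has_greatest_nat[of ?indep "{}" card "Suc r"] card_le
    by (force simp: partials_independent_def)
  have "\<not> partials_independent g (insert j S)" if "j \<in> J - S" for j
    using that S max[of "insert j S"] by auto
  then have "\<forall>j. \<exists>c. fin_strength_quadric (\<lambda>M. fderiv j g M - (\<Sum>i\<in>S. c i * fderiv i g M))"
    using fin_strength_relations_maximal_independent[OF assms(1)] S by blast
  then obtain cc
    where cc: "\<And>j. fin_strength_quadric (\<lambda>M. fderiv j g M - (\<Sum>i\<in>S. cc j i * fderiv i g M))"
    by metis
  obtain e where e: "bij_betw e {..<card S} S"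
    using ex_bij_betw_nat_finite S by (metis atLeast0LessThan)
  have reindex: "(\<Sum>i\<in>S. cc j i * fderiv i g M) = (\<Sum>t<card S. cc j (e t) * fderiv (e t) g M)"
    for j M
    by (rule sum.reindex_bij_betw[OF e, symmetric])
  have "fin_strength_quadric (\<lambda>M. fderiv j g M - (\<Sum>t<card S. cc j (e t) * fderiv (e t) g M))"
    for j
    using cc[of j] by (simp only: reindex)
  with card_le[OF S] show ?thesis
    by (intro exI[of _ "card S"] conjI exI[of _ e] exI[of _ "\<lambda>j t. cc j (e t)"] allI) assumption+
qed

section \<open>Quadrics as sums of squares, cubics as sums of cubes\<close>

lemma quadric_power_sum_repr:
  fixes q :: "(nat, 'k::field) fseries" and ii :: 'k
  assumes "(2::'k) \<noteq> 0" "ii * ii = -1"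
  shows "\<exists>c :: nat \<Rightarrow> _. power_sum_repr 2 c (eval_form 2 q)"
proof (rule power_sum_repr_telescoping)
  fix n
  let ?L = "\<lambda>w. eval_form 1 (\<lambda>M. q (M + {#n#})) (tail_vec (Suc n) w) + q {#n, n#} * w n"
  have "tail_power_sum n 2 (\<lambda>w. w n * ?L w)"
    using assms
    by (intro tail_power_sum_2_product tail_linear_add tail_linear_scale tail_linear_coordinate
        tail_linear_comp_tail_vec lin_functional_eval_form_1) auto
  then show "tail_power_sum n 2
      (\<lambda>w. eval_form 2 q (tail_vec n w) - eval_form 2 q (tail_vec (Suc n) w))"
  proof (rule tail_power_sum_cong)
    fix w :: "nat \<Rightarrow> 'k" assume "finite (supp w)"
    then show "w n * ?L w = eval_form 2 q (tail_vec n w) - eval_form 2 q (tail_vec (Suc n) w)"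
      unfolding tail_vec_Suc[of n w]
      by (simp add: eval_form_2_fun_upd finite_supp_tail_vec algebra_simps power2_eq_square)
  qed
qed (simp_all add: eval_form_zero_vector)

lemma cubic_step:
  fixes y :: "'i \<Rightarrow> 'k::field" and g :: "('i, 'k) fseries" and q :: "nat \<Rightarrow> ('i, 'k) fseries"
    and cc :: "'i \<Rightarrow> nat \<Rightarrow> 'k" and m :: nat
  assumes "finite (supp y)" "y n = 0"
  defines "C \<equiv> \<lambda>v. eval_form 3 g v - (\<Sum>t<m. lin_comb (\<lambda>j. cc j t) v * eval_form 2 (q t) v)"
    and "\<mu> \<equiv> \<lambda>t. eval_form 1 (\<lambda>M. q t (M + {#n#})) y"
  shows "C (y(n := x)) - C y =
    x * (eval_form 2 (fderiv n g) y - (\<Sum>t<m. cc n t * eval_form 2 (q t) y))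
    - x * (\<Sum>t<m. lin_comb (\<lambda>j. cc j t) y * \<mu> t)
    + x^2 * (eval_form 1 (\<lambda>M. g (M + {#n, n#})) y
        - (\<Sum>t<m. q t {#n, n#} * lin_comb (\<lambda>j. cc j t) y + cc n t * \<mu> t)
        + (g {#n, n, n#} - (\<Sum>t<m. cc n t * q t {#n, n#})) * x)"
proof -
  let ?l = "\<lambda>t. lin_comb (\<lambda>j. cc j t)"
  have g: "eval_form 3 g (y(n := x)) - eval_form 3 g y = x * eval_form 2 (fderiv n g) y
      + x^2 * eval_form 1 (\<lambda>M. g (M + {#n, n#})) y + x^3 * g {#n, n, n#}"
    using assms(1,2) by (simp add: eval_form_3_fun_upd eval_form_fderiv)
  have "?l t (y(n := x)) * eval_form 2 (q t) (y(n := x)) - ?l t y * eval_form 2 (q t) y =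
      x * (cc n t * eval_form 2 (q t) y + ?l t y * \<mu> t)
      + x^2 * (q t {#n, n#} * ?l t y + cc n t * \<mu> t) + x^3 * (cc n t * q t {#n, n#})" for t
    using assms(1,2) unfolding \<mu>_def
    by (simp add: lin_comb_fun_upd eval_form_2_fun_upd algebra_simps power2_eq_square power3_eq_cube)
  then have "(\<Sum>t<m. ?l t (y(n := x)) * eval_form 2 (q t) (y(n := x)))
      - (\<Sum>t<m. ?l t y * eval_form 2 (q t) y) =
      x * (\<Sum>t<m. cc n t * eval_form 2 (q t) y) + x * (\<Sum>t<m. ?l t y * \<mu> t)
      + x^2 * (\<Sum>t<m. q t {#n, n#} * ?l t y + cc n t * \<mu> t) + x^3 * (\<Sum>t<m. cc n t * q t {#n, n#})"
    by (simp add: sum_subtractf[symmetric] sum.distrib sum_distrib_left distrib_left)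
  with g show ?thesis
    unfolding C_def by (simp add: algebra_simps power2_eq_square power3_eq_cube)
qed

lemma cubic_increment_tail_power_sum:
  fixes g :: "(nat, 'k::field) fseries" and q a b :: "nat \<Rightarrow> (nat, 'k) fseries"
    and cc :: "nat \<Rightarrow> nat \<Rightarrow> 'k" and s :: nat
  assumes "(6::'k) \<noteq> 0"
    and rel: "\<forall>v. finite (supp v) \<longrightarrow>
      eval_form 2 (fderiv n g) v - (\<Sum>t<m. cc n t * eval_form 2 (q t) v) =
      (\<Sum>k<s. eval_form 1 (a k) v * eval_form 1 (b k) v)"
  defines "C \<equiv> \<lambda>w. eval_form 3 g w - (\<Sum>t<m. lin_comb (\<lambda>j. cc j t) w * eval_form 2 (q t) w)"
  shows "tail_power_sum n 3 (\<lambda>w. C (tail_vec n w) - C (tail_vec (Suc n) w))"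
proof -
  let ?y = "tail_vec (Suc n)"
  define lam where "lam t w = lin_comb (\<lambda>j. cc j t) (?y w)" for t w
  define mu where "mu t w = eval_form 1 (\<lambda>M. q t (M + {#n#})) (?y w)" for t w
  define L where "L w = eval_form 1 (\<lambda>M. g (M + {#n, n#})) (?y w)
    - (\<Sum>t<m. q t {#n, n#} * lam t w + cc n t * mu t w)
    + (g {#n, n, n#} - (\<Sum>t<m. cc n t * q t {#n, n#})) * w n" for w
  have tail_eval: "tail_linear n (\<lambda>w. eval_form 1 f (?y w))" for f
    by (rule tail_linear_comp_tail_vec[OF lin_functional_eval_form_1]) simp
  have lam: "tail_linear n (lam t)" for t
    unfolding lam_def by (rule tail_linear_comp_tail_vec[OF lin_functional_lin_comb]) simp
  have mu: "tail_linear n (mu t)" for t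
    unfolding mu_def by (rule tail_eval)
  have "tail_linear n L"
    unfolding L_def using lam mu tail_eval
    by (intro tail_linear_add tail_linear_diff tail_linear_sum tail_linear_scale tail_linear_coordinate
        finite_lessThan) auto
  with assms(1) lam mu tail_eval
  have "tail_power_sum n 3 (\<lambda>w. (\<Sum>k<s. w n * eval_form 1 (a k) (?y w) * eval_form 1 (b k) (?y w))
      + (\<Sum>t<m. w n * ((-1) * lam t w) * mu t w) + w n ^ 2 * L w)"
    by (intro tail_power_sum_add tail_power_sum_sum tail_power_sum_3_triple_product
        tail_power_sum_3_square_mult tail_linear_coordinate tail_linear_scale finite_lessThan) auto
  then show ?thesis
  proof (rule tail_power_sum_cong)
    fix w :: "nat \<Rightarrow> 'k" assume "finite (supp w)"
    then have fin: "finite (supp (?y w))" by (rule finite_supp_tail_vec)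
    have "C (tail_vec n w) - C (?y w) =
        w n * (eval_form 2 (fderiv n g) (?y w) - (\<Sum>t<m. cc n t * eval_form 2 (q t) (?y w)))
        - w n * (\<Sum>t<m. lam t w * mu t w) + (w n)^2 * L w"
      unfolding tail_vec_Suc[of n w] lam_def mu_def L_def C_def
      by (rule cubic_step[OF fin tail_vec_Suc_at])
    then show "(\<Sum>k<s. w n * eval_form 1 (a k) (?y w) * eval_form 1 (b k) (?y w))
        + (\<Sum>t<m. w n * ((-1) * lam t w) * mu t w) + w n ^ 2 * L w = C (tail_vec n w) - C (?y w)"
      using rel fin by (simp add: sum_distrib_left sum_negf mult_ac)
  qed
qed

lemma cubic_power_sum_repr:
  fixes g :: "(nat, 'k::field) fseries" and q :: "nat \<Rightarrow> (nat, 'k) fseries"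
    and cc :: "nat \<Rightarrow> nat \<Rightarrow> 'k"
  assumes "(6::'k) \<noteq> 0"
    and rel: "\<And>n. fin_strength_quadric (\<lambda>M. fderiv n g M - (\<Sum>t<m. cc n t * q t M))"
  shows "\<exists>c :: nat \<Rightarrow> _. power_sum_repr 3 c
    (\<lambda>w. eval_form 3 g w - (\<Sum>t<m. lin_comb (\<lambda>j. cc j t) w * eval_form 2 (q t) w))"
  (is "\<exists>c. power_sum_repr 3 c ?C")
proof (rule power_sum_repr_telescoping)
  fix n
  obtain s :: nat and a b where "\<forall>v. finite (supp v) \<longrightarrow>
      eval_form 2 (\<lambda>M. fderiv n g M - (\<Sum>t<m. cc n t * q t M)) v =
      (\<Sum>k<s. eval_form 1 (a k) v * eval_form 1 (b k) v)"
    using fin_strength_quadric_eval[OF rel[of n]] by blast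
  then have "\<forall>v. finite (supp v) \<longrightarrow>
      eval_form 2 (fderiv n g) v - (\<Sum>t<m. cc n t * eval_form 2 (q t) v) =
      (\<Sum>k<s. eval_form 1 (a k) v * eval_form 1 (b k) v)"
    by (simp add: eval_form_diff eval_form_sum eval_form_scale)
  then show "tail_power_sum n 3 (\<lambda>w. ?C (tail_vec n w) - ?C (tail_vec (Suc n) w))"
    by (rule cubic_increment_tail_power_sum[OF assms(1)])
qed (simp_all add: eval_form_zero_vector lin_comb_def)

section \<open>Embedding into V(r)\<close>

lemma xyy_monomial_neq_zzz_monomial [simp]:
  "{#Xc t, Yc t j, Yc t j#} \<noteq> {#Zc z, Zc z, Zc z#}"
  "{#Zc z, Zc z, Zc z#} \<noteq> {#Xc t, Yc t j, Yc t j#}"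
proof -
  have "Xc t \<in># {#Xc t, Yc t j, Yc t j#}" "Xc t \<notin># {#Zc z, Zc z, Zc z#}" by simp_all
  then show "{#Xc t, Yc t j, Yc t j#} \<noteq> {#Zc z, Zc z, Zc z#}"
    and "{#Zc z, Zc z, Zc z#} \<noteq> {#Xc t, Yc t j, Yc t j#}" by metis+
qed

lemma f_r_nonzero:
  assumes "(f_r r M :: 'k::comm_ring_1) \<noteq> 0"
  shows "(\<exists>t j. t < r \<and> M = {#Xc t, Yc t j, Yc t j#}) \<or> (\<exists>z. M = {#Zc z, Zc z, Zc z#})"
  using assms unfolding f_r_def by (auto split: if_splits)

lemma f_r_xyy_monomial: "t < r \<Longrightarrow> (f_r r {#Xc t, Yc t j, Yc t j#} :: 'k::comm_ring_1) = 3"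
  unfolding f_r_def by auto

lemma f_r_zzz_monomial: "(f_r r {#Zc z, Zc z, Zc z#} :: 'k::comm_ring_1) = 1"
  unfolding f_r_def by auto

lemma inj_on_xyy_monomial: "inj_on (\<lambda>(t, j). {#Xc t, Yc t j, Yc t j#}) A"
proof (rule inj_onI)
  fix p p' :: "nat \<times> nat"
  obtain t j t' j' where p: "p = (t, j)" and p': "p' = (t', j')" by fastforce
  assume "(\<lambda>(t, j). {#Xc t, Yc t j, Yc t j#}) p = (\<lambda>(t, j). {#Xc t, Yc t j, Yc t j#}) p'"
  then have eq: "{#Xc t, Yc t j, Yc t j#} = {#Xc t', Yc t' j', Yc t' j'#}" by (simp add: p p')
  have "Xc t \<in># {#Xc t, Yc t j, Yc t j#}" "Yc t j \<in># {#Xc t, Yc t j, Yc t j#}" by simp_all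
  then show "p = p'" unfolding eq by (auto simp: p p')
qed

lemma inj_on_zzz_monomial: "inj_on (\<lambda>z. {#Zc z, Zc z, Zc z#}) A"
proof (rule inj_onI)
  fix z z' assume eq: "{#Zc z, Zc z, Zc z#} = {#Zc z', Zc z', Zc z'#}"
  have "Zc z \<in># {#Zc z, Zc z, Zc z#}" by simp
  then show "z = z'" unfolding eq by simp
qed

lemma eval_form_f_r:
  fixes v :: "vr_idx \<Rightarrow> 'k::field"
  assumes fin: "finite (supp v)"
  shows "eval_form 3 (f_r r) v =
    3 * (\<Sum>t<r. v (Xc t) * (\<Sum>j | v (Yc t j) \<noteq> 0. v (Yc t j) ^ 2)) + (\<Sum>z | v (Zc z) \<noteq> 0. v (Zc z) ^ 3)"
proof -
  define XY where "XY = (SIGMA t:{..<r}. {j. v (Yc t j) \<noteq> 0})"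
  define Z where "Z = {z. v (Zc z) \<noteq> 0}"
  define mx where "mx = (\<lambda>(t, j). {#Xc t, Yc t j, Yc t j#})"
  define mz where "mz = (\<lambda>z. {#Zc z, Zc z, Zc z#})"
  have fin_Y: "finite {j. v (Yc t j) \<noteq> 0}" for t
    using finite_vimageI[OF fin, of "Yc t"] by (simp add: inj_def vimage_def)
  have fin_Z: "finite Z"
    using finite_vimageI[OF fin, of Zc] by (simp add: Z_def inj_def vimage_def)
  have "finite XY" using fin_Y by (simp add: XY_def)
  have "eval_form 3 (f_r r) v = (\<Sum>M\<in>mx ` XY \<union> mz ` Z. f_r r M * (\<Prod>i\<in>#M. v i))"
  proof (rule eval_form_eq_sum[OF fin])
    fix M :: "vr_idx multiset" assume "f_r r M \<noteq> 0" and nonzero: "(\<Prod>i\<in>#M. v i) \<noteq> 0"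
    then consider t j where "t < r" "M = {#Xc t, Yc t j, Yc t j#}" | z where "M = {#Zc z, Zc z, Zc z#}"
      using f_r_nonzero by blast
    then show "M \<in> mx ` XY \<union> mz ` Z"
    proof cases
      case (1 t j)
      with nonzero have "(t, j) \<in> XY" by (simp add: XY_def)
      then show ?thesis by (auto simp: 1 mx_def)
    next
      case (2 z)
      with nonzero have "z \<in> Z" by (simp add: Z_def)
      then show ?thesis by (auto simp: 2 mz_def)
    qed
  qed (use \<open>finite XY\<close> fin_Z in \<open>auto simp: mx_def mz_def\<close>)
  also have "\<dots> = (\<Sum>M\<in>mx ` XY. f_r r M * (\<Prod>i\<in>#M. v i)) + (\<Sum>M\<in>mz ` Z. f_r r M * (\<Prod>i\<in>#M. v i))"
    by (rule sum.union_disjoint) (use \<open>finite XY\<close> fin_Z in \<open>auto simp: mx_def mz_def\<close>)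
  also have "(\<Sum>M\<in>mx ` XY. f_r r M * (\<Prod>i\<in>#M. v i)) = (\<Sum>p\<in>XY. f_r r (mx p) * (\<Prod>i\<in>#mx p. v i))"
    unfolding mx_def by (rule sum.reindex[OF inj_on_xyy_monomial, unfolded comp_def])
  also have "\<dots> = 3 * (\<Sum>(t, j)\<in>XY. v (Xc t) * v (Yc t j) ^ 2)"
    unfolding sum_distrib_left
    by (rule sum.cong) (auto simp: XY_def mx_def f_r_xyy_monomial power2_eq_square mult_ac)
  also have "(\<Sum>M\<in>mz ` Z. f_r r M * (\<Prod>i\<in>#M. v i)) = (\<Sum>z\<in>Z. f_r r (mz z) * (\<Prod>i\<in>#mz z. v i))"
    unfolding mz_def by (rule sum.reindex[OF inj_on_zzz_monomial, unfolded comp_def])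
  also have "\<dots> = (\<Sum>z\<in>Z. v (Zc z) ^ 3)"
    by (simp add: mz_def f_r_zzz_monomial power3_eq_cube mult_ac)
  finally show ?thesis
    by (simp add: XY_def Z_def sum.Sigma[symmetric] fin_Y sum_distrib_left)
qed

definition vr_map :: "nat \<Rightarrow> (nat \<Rightarrow> ('i \<Rightarrow> 'k) \<Rightarrow> 'k) \<Rightarrow> (nat \<Rightarrow> nat \<Rightarrow> ('i \<Rightarrow> 'k) \<Rightarrow> 'k) \<Rightarrow>
    (nat \<Rightarrow> ('i \<Rightarrow> 'k) \<Rightarrow> 'k) \<Rightarrow> ('i \<Rightarrow> 'k) \<Rightarrow> vr_idx \<Rightarrow> 'k::zero" where
  "vr_map m x y z w v = (case v of
     Xc t \<Rightarrow> if t < m then x t w else 0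
   | Yc t j \<Rightarrow> if t < m then y t j w else 0
   | Zc i \<Rightarrow> z i w)"

lemma vr_map_in_fin_vecs:
  assumes "m \<le> r" "\<And>t. power_sum_repr 2 (y t) (Q t)" "power_sum_repr 3 z C" "finite (supp w)"
  shows "vr_map m x y z w \<in> fin_vecs (vr_coords r)"
proof -
  have "supp (vr_map m x y z w) \<subseteq> Xc ` {..<m} \<union>
      (\<lambda>(t, j). Yc t j) ` (SIGMA t:{..<m}. {j. y t j w \<noteq> 0}) \<union> Zc ` {i. z i w \<noteq> 0}"
  proof
    fix v assume "v \<in> supp (vr_map m x y z w)"
    then show "v \<in> Xc ` {..<m} \<union> (\<lambda>(t, j). Yc t j) ` (SIGMA t:{..<m}. {j. y t j w \<noteq> 0}) \<union>
        Zc ` {i. z i w \<noteq> 0}"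
      by (cases v) (auto simp: vr_map_def split: if_splits)
  qed
  moreover have "finite (Xc ` {..<m} \<union>
      (\<lambda>(t, j). Yc t j) ` (SIGMA t:{..<m}. {j. y t j w \<noteq> 0}) \<union> Zc ` {i. z i w \<noteq> 0})"
    using assms(2-4) by (auto simp: power_sum_repr_def)
  ultimately have "finite (supp (vr_map m x y z w))"
    by (rule finite_subset)
  moreover have "vr_map m x y z w v = 0" if "v \<notin> vr_coords r" for v
    using that assms(1) by (cases v) (auto simp: vr_map_def vr_coords_def)
  ultimately show ?thesis by (auto simp: fin_vecs_def)
qed

lemma eval_form_f_r_vr_map:
  fixes x :: "nat \<Rightarrow> ('i \<Rightarrow> 'k::field) \<Rightarrow> 'k"
  assumes "m \<le> r" "\<And>t. power_sum_repr 2 (y t) (Q t)" "power_sum_repr 3 z C" "finite (supp w)"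
  shows "eval_form 3 (f_r r) (vr_map m x y z w) = 3 * (\<Sum>t<m. x t w * Q t w) + C w"
proof -
  have "(\<Sum>t<r. vr_map m x y z w (Xc t) *
        (\<Sum>j | vr_map m x y z w (Yc t j) \<noteq> 0. vr_map m x y z w (Yc t j) ^ 2)) =
      (\<Sum>t<m. x t w * Q t w)"
  proof (rule sum.mono_neutral_cong_right)
    show "vr_map m x y z w (Xc t) *
        (\<Sum>j | vr_map m x y z w (Yc t j) \<noteq> 0. vr_map m x y z w (Yc t j) ^ 2) = x t w * Q t w"
      if "t \<in> {..<m}" for t
      using that assms(2)[of t] assms(4) by (simp add: vr_map_def power_sum_repr_def)
  qed (use assms(1) in \<open>auto simp: vr_map_def\<close>)
  moreover have "(\<Sum>i | vr_map m x y z w (Zc i) \<noteq> 0. vr_map m x y z w (Zc i) ^ 3) = C w"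
    using assms(3,4) by (simp add: vr_map_def power_sum_repr_def)
  ultimately show ?thesis
    using vr_map_in_fin_vecs[OF assms] by (simp add: eval_form_f_r fin_vecs_def)
qed

lemma cubic_embedding_vr_map:
  fixes g :: "('i, 'k::field) fseries"
  assumes "m \<le> r"
    and x: "\<And>t. lin_functional (x t)"
    and y: "\<And>t. power_sum_repr 2 (y t) (Q t)"
    and z: "power_sum_repr 3 z C"
    and g: "\<And>w. finite (supp w) \<Longrightarrow> eval_form 3 g w = 3 * (\<Sum>t<m. x t w * Q t w) + C w"
  shows "cubic_embedding J g (vr_coords r) (f_r r) (vr_map m x y z)"
proof -
  have "lin_functional (\<lambda>w. vr_map m x y z w v)" for v
    using x y z by (cases v) (auto simp: vr_map_def power_sum_repr_def lin_functional_def)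
  moreover have "vr_map m x y z w \<in> fin_vecs (vr_coords r)"
    and "eval_form 3 (f_r r) (vr_map m x y z w) = eval_form 3 g w" if "finite (supp w)" for w
    using vr_map_in_fin_vecs[OF assms(1) y z that] eval_form_f_r_vr_map[OF assms(1) y z that] g[OF that]
    by simp_all
  ultimately show ?thesis
    unfolding cubic_embedding_def fin_vecs_def lin_functional_def by (auto simp: fun_eq_iff)
qed

lemma alg_closed_sqrt_minus_one:
  assumes "\<forall>p::'k poly. degree p \<noteq> 0 \<longrightarrow> (\<exists>x. poly p x = 0)"
  obtains i :: "'k::field" where "i * i = -1"
proof -
  have "degree [:1, 0, 1::'k:] \<noteq> 0" by simp
  then obtain x where "poly [:1, 0, 1::'k:] x = 0" using assms by blast
  then show ?thesis by (intro that[of x]) (simp add: algebra_simps eq_neg_iff_add_eq_0)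
qed

theorem lemma5p3:
  fixes r :: nat and J :: "nat set" and g :: "(nat, 'k::field) fseries"
  assumes alg_closed: "\<forall>p::'k poly. degree p \<noteq> 0 \<longrightarrow> (\<exists>x. poly p x = 0)"
    and char2: "(2::'k) \<noteq> 0" and char3: "(3::'k) \<noteq> 0"
    and cubic: "cubic_form J g"
    and rrk: "rrk J g \<le> enat r"
  shows "\<exists>\<phi>. cubic_embedding J g (vr_coords r) (f_r r) \<phi>"
proof -
  obtain m s cc where "m \<le> r"
    and rel: "\<forall>j. fin_strength_quadric (\<lambda>M. fderiv j g M - (\<Sum>t<m. cc j t * fderiv (s t) g M))"
    using rrk_fin_strength_relations[OF cubic rrk] by blast
  obtain ii :: 'k where ii: "ii * ii = -1"
    by (rule alg_closed_sqrt_minus_one[OF alg_closed])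
  have six: "(6::'k) \<noteq> 0"
    using no_zero_divisors[OF char2 char3] by simp
  have "\<forall>t. \<exists>c :: nat \<Rightarrow> _. power_sum_repr 2 c (eval_form 2 (fderiv (s t) g))"
    using quadric_power_sum_repr[OF char2 ii] by blast
  from choice[OF this] obtain y :: "nat \<Rightarrow> nat \<Rightarrow> (nat \<Rightarrow> 'k) \<Rightarrow> 'k"
    where y: "\<forall>t. power_sum_repr 2 (y t) (eval_form 2 (fderiv (s t) g))"
    by blast
  obtain z :: "nat \<Rightarrow> (nat \<Rightarrow> 'k) \<Rightarrow> 'k" where z: "power_sum_repr 3 z (\<lambda>w. eval_form 3 g w -
      (\<Sum>t<m. lin_comb (\<lambda>j. cc j t) w * eval_form 2 (fderiv (s t) g) w))"
    using cubic_power_sum_repr[OF six rel[rule_format]] by blast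
  have "3 * lin_comb (\<lambda>j. cc j t / 3) w = lin_comb (\<lambda>j. cc j t) w" for t w
    using char3 by (simp add: lin_comb_def sum_distrib_left)
  then have "cubic_embedding J g (vr_coords r) (f_r r) (vr_map m (\<lambda>t. lin_comb (\<lambda>j. cc j t / 3)) y z)"
    using \<open>m \<le> r\<close> lin_functional_lin_comb y z
    by (intro cubic_embedding_vr_map) (auto simp: sum_distrib_left mult.assoc[symmetric])
  then show ?thesis by blast
qed

end
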